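(* Let $0<q<1$, $\Sigma\sim\mathrm{Mallows}(\mathbb{Z},q)$, $I_n:=\{-n,\dots,n\}$ and $J_n:=\{-n+1,\dots,n\}$. Almost surely there exists a (random) $N\in\mathbb{N}$ such that $\Sigma_{I_n}(i)=\Sigma_{J_n}(i)=\Sigma(i)$ for all $n\ge N$ and all $i$ with $|i|\le n-\log^2 n$.
   Context: For a finite set $A\subseteq\mathbb{Z}$ and a bijection $\pi:A\to A$, $\mathrm{inv}(\pi)$ is the number of pairs $i<j$ in $A$ with $\pi(i)>\pi(j)$, and $\Pi_A\sim\mathrm{Mallows}(A,q)$ means $\mathbb{P}(\Pi_A=\pi)\propto q^{\mathrm{inv}(\pi)}$ over bijections $\pi$ of $A$. For a bijection $\sigma$ of a set $B\subseteq\mathbb{Z}$ and finite $A\subseteq B$, the pattern $\sigma_A:A\to A$ is defined by $\sigma_A(a)=a_{(i)}$ when $\sigma(a)$ is the $i$-th smallest element of $\sigma[A]$, where $a_{(i)}$ is the $i$-th smallest element of $A$. For $0<q<1$, $\mathrm{Mallows}(\mathbb{Z},q)$ is Gnedin and Olshanski's bi-infinite Mallows measure: the law of a random bijection $\Sigma$ of $\mathbb{Z}$ such that $\Sigma_I\sim\mathrm{Mallows}(I,q)$ for every finite interval of integers $I$, and, almost surely for every $i\in\mathbb{Z}$ one has $\Sigma_{I_n}(i)=\Sigma(i)$ for all sufficiently large $n$. It is also known that $\mathbb{P}(|\Sigma(i)-i|>m)=\Theta(q^m)$ uniformly in $i\in\mathbb{Z}$. *)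

theory Defs
  imports "HOL-Probability.Probability" "HOL-Combinatorics.Permutations"
begin

definition inversions :: "(int \<Rightarrow> int) \<Rightarrow> int set \<Rightarrow> nat" where
  "inversions \<pi> A = card {(i, j). i \<in> A \<and> j \<in> A \<and> i < j \<and> \<pi> i > \<pi> j}"

text \<open>Pattern sigma_A of sigma on the finite set A: sigma_A(a) is the (k+1)-th smallest
  element of A, where k is the number of b in A with sigma b < sigma a (i.e. sigma a is the
  (k+1)-th smallest element of sigma[A]).\<close>
definition pattern :: "(int \<Rightarrow> int) \<Rightarrow> int set \<Rightarrow> int \<Rightarrow> int" where
  "pattern \<sigma> A a =
     (if a \<in> A then sorted_list_of_set A ! card {b \<in> A. \<sigma> b < \<sigma> a} else a)"

text \<open>Bi-infinite Mallows(Z,q) law (Gnedin--Olshanski), as described in the paper: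
  Sigma is a random bijection of Z on the probability space M such that every pattern on a
  finite integer interval I is Mallows(I,q)-distributed, and almost surely, for every i,
  the pattern on I_n = {-n..n} evaluated at i equals Sigma(i) for all large n.\<close>
definition mallows_Z :: "'w measure \<Rightarrow> real \<Rightarrow> ('w \<Rightarrow> int \<Rightarrow> int) \<Rightarrow> bool" where
  "mallows_Z M q \<Sigma> \<longleftrightarrow>
     prob_space M \<and>
     (AE \<omega> in M. bij (\<Sigma> \<omega>)) \<and>
     (\<forall>a b :: int. \<forall>\<pi>. \<pi> permutes {a..b} \<longrightarrow>
        {\<omega> \<in> space M. pattern (\<Sigma> \<omega>) {a..b} = \<pi>} \<in> sets M \<and>
        measure M {\<omega> \<in> space M. pattern (\<Sigma> \<omega>) {a..b} = \<pi>} =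
          q ^ inversions \<pi> {a..b} / (\<Sum>\<tau> \<in> {\<tau>. \<tau> permutes {a..b}}. q ^ inversions \<tau> {a..b})) \<and>
     (AE \<omega> in M. \<forall>i. eventually (\<lambda>n::nat. pattern (\<Sigma> \<omega>) {- int n..int n} i = \<Sigma> \<omega> i) sequentially)"

end

theory Submission
  imports Defs "HOL-Real_Asymp.Real_Asymp"
begin

text \<open>A position x of a Mallows permutation on a finite set is pushed up to x + m only if at
  least m positions to its right carry smaller values.  Swapping x with the one of them carrying
  the largest value destroys an inversion and loses at most one such position, and this map is
  injective; so the event has Mallows weight at most q^m, and by reflection the same holds for
  being pushed down.  Hence two positions at distance 2m are inverted in the pattern on an
  interval with probability at most 2 q^m.

  Take the window |i| \<le> n - K log n with K = 8 / log (1/q).  The probability that some i of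
  the window is inverted against -n - 1 or n + 1 in the pattern on {-n-1..n+1}, or against -n in
  the pattern on {-n..n}, is O(n^-3), so by Borel--Cantelli this eventually never happens.  But
  if the values at -m - 1 and m + 1 lie on either side of the value at i for all m \<ge> n, then the
  pattern value at i does not change as the interval grows, so it already equals its limit
  \<Sigma>(i); and if the value at -n lies below it, dropping -n changes nothing either.  For large n,
  |i| \<le> n - log^2 n puts i into all windows m \<ge> n.\<close>

definition inversion_pairs :: "(int \<Rightarrow> int) \<Rightarrow> int set \<Rightarrow> (int \<times> int) set" where
  "inversion_pairs \<pi> A = {(i, j). i \<in> A \<and> j \<in> A \<and> i < j \<and> \<pi> i > \<pi> j}"

lemma inversions_eq_card_inversion_pairs: "inversions \<pi> A = card (inversion_pairs \<pi> A)"
  by (simp add: inversions_def inversion_pairs_def)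

lemma finite_inversion_pairs: "finite A \<Longrightarrow> finite (inversion_pairs \<pi> A)"
  by (rule finite_subset[of _ "A \<times> A"]) (auto simp: inversion_pairs_def)

text \<open>No position strictly between x and k carries a value between \<pi> k and \<pi> x, so the pairs
  with one end in {x, k} and the other strictly between them keep their status, while every other
  inversion of the new permutation is carried by the transposition to an inversion of the old one
  other than (x, k).\<close>
lemma inversions_transpose_less:
  assumes fin: "finite A" and inj: "inj \<pi>" and x: "x \<in> A" and k: "k \<in> A"
    and xk: "x < k" and inv: "\<pi> k < \<pi> x"
    and gap: "\<And>r. r \<in> A \<Longrightarrow> x < r \<Longrightarrow> r < k \<Longrightarrow> \<pi> r < \<pi> k \<or> \<pi> x < \<pi> r"
  shows "inversions (\<pi> \<circ> Transposition.transpose x k) A < inversions \<pi> A"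
proof -
  define t where "t = Transposition.transpose x k"
  define \<tau> where "\<tau> = \<pi> \<circ> t"
  have tt: "t (t y) = y" for y
    unfolding t_def by simp
  have tx: "\<tau> x = \<pi> k" and tk: "\<tau> k = \<pi> x" and to: "\<And>r. r \<noteq> x \<Longrightarrow> r \<noteq> k \<Longrightarrow> \<tau> r = \<pi> r"
    by (auto simp: \<tau>_def t_def)
  define P where "P = (\<lambda>(i::int, j::int). (i \<in> {x, k} \<and> x < j \<and> j < k) \<or> (j \<in> {x, k} \<and> x < i \<and> i < k))"
  define h where "h = (\<lambda>(i, j). if P (i, j) then (i, j) else (t i, t j))"
  have tP: "P (t i, t j) = P (i, j)" for i j
    using xk unfolding P_def t_def by (auto simp: Transposition.transpose_def)
  have into: "h ` inversion_pairs \<tau> A \<subseteq> inversion_pairs \<pi> A - {(x, k)}"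
  proof
    fix z assume "z \<in> h ` inversion_pairs \<tau> A"
    then obtain i j where ij: "(i, j) \<in> inversion_pairs \<tau> A" "z = h (i, j)" by auto
    have iA: "i \<in> A" "j \<in> A" "i < j" "\<tau> i > \<tau> j"
      using ij(1) by (auto simp: inversion_pairs_def)
    show "z \<in> inversion_pairs \<pi> A - {(x, k)}"
    proof (cases "P (i, j)")
      case True
      then have z: "z = (i, j)" using ij by (simp add: h_def)
      show ?thesis using True iA inv gap tx tk to unfolding z inversion_pairs_def P_def
        by (smt (verit, best) insert_iff mem_Collect_eq prod.simps(2) singletonD DiffI)
    next
      case False
      then have z: "z = (t i, t j)" using ij by (simp add: h_def)
      have tA: "t i \<in> A" "t j \<in> A"
        using iA x k unfolding t_def by (auto simp: Transposition.transpose_def)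
      have "(i, j) \<noteq> (x, k)"
        using iA(4) tx tk inv by (metis less_asym old.prod.inject)
      then have "t i < t j" using False iA(3) xk
        unfolding P_def t_def Transposition.transpose_def by auto
      moreover have "(t i, t j) \<noteq> (x, k)"
        using iA(3) xk unfolding t_def Transposition.transpose_def by auto
      ultimately have "t i < t j \<and> \<pi> (t i) > \<pi> (t j) \<and> (t i, t j) \<noteq> (x, k)"
        using iA(4) by (simp add: \<tau>_def)
      then show ?thesis using tA unfolding z inversion_pairs_def by auto
    qed
  qed
  have "inj_on h (inversion_pairs \<tau> A)"
  proof (rule inj_onI)
    fix z1 z2 assume "z1 \<in> inversion_pairs \<tau> A" "z2 \<in> inversion_pairs \<tau> A" and e: "h z1 = h z2"
    obtain i1 j1 i2 j2 where z: "z1 = (i1, j1)" "z2 = (i2, j2)" by fastforce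
    consider "P z1 = P z2" | "P z1 \<noteq> P z2" by blast
    then show "z1 = z2"
    proof cases
      case 1
      then show ?thesis using e tt unfolding z h_def by (auto split: if_splits) metis+
    next
      case 2
      then show ?thesis using e tP unfolding z h_def by (auto split: if_splits)
    qed
  qed
  moreover have "(x, k) \<in> inversion_pairs \<pi> A"
    using x k xk inv by (auto simp: inversion_pairs_def)
  ultimately have "card (inversion_pairs \<tau> A) < card (inversion_pairs \<pi> A)"
    using card_inj_on_le[OF _ into] finite_inversion_pairs[OF fin]
    by (metis card_Diff1_less finite_Diff le_less_trans)
  then show ?thesis
    unfolding \<tau>_def t_def inversions_eq_card_inversion_pairs .
qed

definition smaller_right :: "(int \<Rightarrow> int) \<Rightarrow> int set \<Rightarrow> int \<Rightarrow> int set" where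
  "smaller_right \<pi> A x = {r \<in> A. x < r \<and> \<pi> r < \<pi> x}"

definition swap_partner :: "(int \<Rightarrow> int) \<Rightarrow> int set \<Rightarrow> int \<Rightarrow> int" where
  "swap_partner \<pi> A x = inv \<pi> (Max (\<pi> ` smaller_right \<pi> A x))"

definition swap_down :: "(int \<Rightarrow> int) \<Rightarrow> int set \<Rightarrow> int \<Rightarrow> int \<Rightarrow> int" where
  "swap_down \<pi> A x = \<pi> \<circ> Transposition.transpose x (swap_partner \<pi> A x)"

lemma swap_partner:
  assumes p: "\<pi> permutes A" and fin: "finite A" and ne: "smaller_right \<pi> A x \<noteq> {}"
  defines "k \<equiv> swap_partner \<pi> A x"
  shows "k \<in> A" "x < k" "\<pi> k < \<pi> x"
    and "\<And>r. r \<in> A \<Longrightarrow> x < r \<Longrightarrow> r \<noteq> k \<Longrightarrow> \<pi> r < \<pi> k \<or> \<pi> x < \<pi> r"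
proof -
  let ?R = "smaller_right \<pi> A x"
  have finR: "finite ?R" using fin by (simp add: smaller_right_def)
  have "Max (\<pi> ` ?R) \<in> \<pi> ` ?R" using finR ne by (intro Max_in) auto
  then obtain r0 where r0: "r0 \<in> ?R" "\<pi> r0 = Max (\<pi> ` ?R)" by auto
  have "k = r0" unfolding k_def swap_partner_def using r0(2) permutes_inverses(2)[OF p] by metis
  then have kR: "k \<in> ?R" and kmax: "\<And>r. r \<in> ?R \<Longrightarrow> \<pi> r \<le> \<pi> k"
    using r0 finR by auto
  then show "k \<in> A" "x < k" "\<pi> k < \<pi> x" by (auto simp: smaller_right_def)
  fix r assume r: "r \<in> A" "x < r" "r \<noteq> k"
  have "\<pi> r \<noteq> \<pi> k" "\<pi> r \<noteq> \<pi> x"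
    using r \<open>x < k\<close> permutes_inj[OF p] by (auto dest: injD)
  then show "\<pi> r < \<pi> k \<or> \<pi> x < \<pi> r"
    using kmax[of r] r by (fastforce simp: smaller_right_def)
qed

lemma swap_down:
  assumes p: "\<pi> permutes A" and fin: "finite A" and x: "x \<in> A" and ne: "smaller_right \<pi> A x \<noteq> {}"
  shows "swap_down \<pi> A x permutes A"
    and "inversions (swap_down \<pi> A x) A < inversions \<pi> A"
    and "card (smaller_right \<pi> A x) \<le> Suc (card (smaller_right (swap_down \<pi> A x) A x))"
proof -
  define k where "k = swap_partner \<pi> A x"
  note K = swap_partner[OF p fin ne, folded k_def]
  have \<tau>: "swap_down \<pi> A x = \<pi> \<circ> Transposition.transpose x k"
    by (simp add: swap_down_def k_def)
  show "swap_down \<pi> A x permutes A"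
    unfolding \<tau> by (rule permutes_compose[OF permutes_swap_id[OF x K(1)] p])
  show "inversions (swap_down \<pi> A x) A < inversions \<pi> A"
    unfolding \<tau> using K by (intro inversions_transpose_less fin permutes_inj[OF p] x) auto
  have "smaller_right \<pi> A x - {k} \<subseteq> smaller_right (swap_down \<pi> A x) A x"
    using K unfolding \<tau> smaller_right_def by (fastforce simp: Transposition.transpose_def)
  moreover have "finite (smaller_right (swap_down \<pi> A x) A x)"
    using fin by (simp add: smaller_right_def)
  ultimately have "card (smaller_right \<pi> A x - {k}) \<le> card (smaller_right (swap_down \<pi> A x) A x)"
    by (rule card_mono[rotated])
  then show "card (smaller_right \<pi> A x) \<le> Suc (card (smaller_right (swap_down \<pi> A x) A x))"
    using fin by (simp add: card_Diff_singleton_if smaller_right_def split: if_splits)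
qed

lemma inj_on_swap_down:
  assumes fin: "finite A"
  shows "inj_on (\<lambda>\<pi>. swap_down \<pi> A x) {\<pi>. \<pi> permutes A \<and> smaller_right \<pi> A x \<noteq> {}}"
proof (rule inj_onI)
  fix \<pi>1 \<pi>2
  assume p1: "\<pi>1 \<in> {\<pi>. \<pi> permutes A \<and> smaller_right \<pi> A x \<noteq> {}}"
    and p2: "\<pi>2 \<in> {\<pi>. \<pi> permutes A \<and> smaller_right \<pi> A x \<noteq> {}}"
    and e: "swap_down \<pi>1 A x = swap_down \<pi>2 A x"
  define k1 where "k1 = swap_partner \<pi>1 A x"
  define k2 where "k2 = swap_partner \<pi>2 A x"
  have K1: "k1 \<in> A" "x < k1" "\<pi>1 k1 < \<pi>1 x"
      "\<And>r. r \<in> A \<Longrightarrow> x < r \<Longrightarrow> r \<noteq> k1 \<Longrightarrow> \<pi>1 r < \<pi>1 k1 \<or> \<pi>1 x < \<pi>1 r"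
    using swap_partner[of \<pi>1 A x] p1 fin unfolding k1_def by auto
  have K2: "k2 \<in> A" "x < k2" "\<pi>2 k2 < \<pi>2 x"
      "\<And>r. r \<in> A \<Longrightarrow> x < r \<Longrightarrow> r \<noteq> k2 \<Longrightarrow> \<pi>2 r < \<pi>2 k2 \<or> \<pi>2 x < \<pi>2 r"
    using swap_partner[of \<pi>2 A x] p2 fin unfolding k2_def by auto
  have ev: "\<pi>1 (Transposition.transpose x k1 r) = \<pi>2 (Transposition.transpose x k2 r)" for r
    using fun_cong[OF e, of r] by (simp add: swap_down_def k1_def k2_def)
  have "k1 = k2"
  proof (rule ccontr)
    assume ne: "k1 \<noteq> k2"
    have "\<pi>1 k1 = \<pi>2 k2" using ev[of x] by simp
    moreover have "\<pi>1 k2 = \<pi>2 x" using ev[of k2] ne K2(2) by (auto simp: Transposition.transpose_def)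
    moreover have "\<pi>2 k1 = \<pi>1 x" using ev[of k1] ne K1(2) by (auto simp: Transposition.transpose_def)
    ultimately show False using K1(4)[OF K2(1,2) ne[symmetric]] K2(4)[OF K1(1,2) ne] K1(3) K2(3)
      by auto
  qed
  show "\<pi>1 = \<pi>2"
  proof
    fix r
    show "\<pi>1 r = \<pi>2 r" using ev[of "Transposition.transpose x k1 r"] \<open>k1 = k2\<close> by simp
  qed
qed

definition mallows_weight :: "real \<Rightarrow> int set \<Rightarrow> (int \<Rightarrow> int) set \<Rightarrow> real" where
  "mallows_weight q A S = (\<Sum>\<pi>\<in>S. q ^ inversions \<pi> A)"

lemma mallows_weight_mono:
  "finite T \<Longrightarrow> S \<subseteq> T \<Longrightarrow> 0 \<le> q \<Longrightarrow> mallows_weight q A S \<le> mallows_weight q A T"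
  unfolding mallows_weight_def by (intro sum_mono2) auto

lemma mallows_weight_permutes_ge_one:
  assumes "finite A" and "0 \<le> q"
  shows "1 \<le> mallows_weight q A {\<pi>. \<pi> permutes A}"
proof -
  have "inversion_pairs id A = {}" by (auto simp: inversion_pairs_def)
  then have "inversions id A = 0" by (simp add: inversions_eq_card_inversion_pairs)
  then have "1 = q ^ inversions id A" by simp
  also have "\<dots> \<le> mallows_weight q A {\<pi>. \<pi> permutes A}" unfolding mallows_weight_def
    using assms permutes_id[of A] by (intro member_le_sum) (auto simp: finite_permutations id_def)
  finally show ?thesis .
qed

lemma mallows_weight_smaller_right_Suc:
  assumes fin: "finite A" and x: "x \<in> A" and q: "0 \<le> q" "q \<le> 1"
  shows "mallows_weight q A {\<pi>. \<pi> permutes A \<and> Suc j \<le> card (smaller_right \<pi> A x)}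
    \<le> q * mallows_weight q A {\<pi>. \<pi> permutes A \<and> j \<le> card (smaller_right \<pi> A x)}"
    (is "mallows_weight q A ?S1 \<le> q * mallows_weight q A ?S0")
proof -
  let ?f = "\<lambda>\<pi>. swap_down \<pi> A x"
  have ne: "smaller_right \<pi> A x \<noteq> {}" if "\<pi> \<in> ?S1" for \<pi>
    using that by auto
  have inj: "inj_on ?f ?S1"
    using ne by (intro inj_on_subset[OF inj_on_swap_down[OF fin]]) auto
  have img: "?f ` ?S1 \<subseteq> ?S0"
    using swap_down[OF _ fin x ne] by fastforce
  have fin0: "finite ?S0"
    by (rule finite_subset[OF _ finite_permutations[OF fin]]) auto
  have "mallows_weight q A ?S1 \<le> (\<Sum>\<pi>\<in>?S1. q * q ^ inversions (?f \<pi>) A)"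
    unfolding mallows_weight_def
  proof (rule sum_mono)
    fix \<pi> assume \<pi>: "\<pi> \<in> ?S1"
    have "Suc (inversions (?f \<pi>) A) \<le> inversions \<pi> A"
      using swap_down(2)[OF _ fin x ne[OF \<pi>]] \<pi> by auto
    then show "q ^ inversions \<pi> A \<le> q * q ^ inversions (?f \<pi>) A"
      using power_decreasing[OF _ q] by (metis power_Suc)
  qed
  also have "\<dots> = q * mallows_weight q A (?f ` ?S1)"
    by (simp add: mallows_weight_def sum_distrib_left sum.reindex[OF inj])
  also have "\<dots> \<le> q * mallows_weight q A ?S0"
    using q img fin0 by (intro mult_left_mono mallows_weight_mono) auto
  finally show ?thesis .
qed

lemma mallows_weight_smaller_right_ge:
  assumes "finite A" and "x \<in> A" and q: "0 \<le> q" "q \<le> 1"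
  shows "mallows_weight q A {\<pi>. \<pi> permutes A \<and> m \<le> card (smaller_right \<pi> A x)}
    \<le> q ^ m * mallows_weight q A {\<pi>. \<pi> permutes A}"
proof (induction m)
  case (Suc m)
  then show ?case
    using mallows_weight_smaller_right_Suc[OF assms, of m] mult_left_mono[OF Suc q(1)]
    by (simp add: mult.assoc)
qed simp

lemma finite_interval_filter [simp]: "finite {k. a \<le> k \<and> k \<le> b \<and> P k}" for a b :: int
  by (rule finite_subset[OF _ finite_atLeastAtMost_int[of a b]]) auto

lemma displacement_le_card_smaller_right:
  assumes p: "\<pi> permutes {a..b}" and x: "x \<in> {a..b}"
  shows "\<pi> x - x \<le> int (card (smaller_right \<pi> {a..b} x))"
proof -
  let ?L = "{r \<in> {a..b}. \<pi> r < \<pi> x}"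
  have \<pi>x: "\<pi> x \<in> {a..b}" using permutes_in_image[OF p] x by auto
  have "\<pi> ` ?L = {a..\<pi> x - 1}"
  proof
    show "\<pi> ` ?L \<subseteq> {a..\<pi> x - 1}" using permutes_in_image[OF p] by fastforce
    show "{a..\<pi> x - 1} \<subseteq> \<pi> ` ?L"
    proof
      fix v assume v: "v \<in> {a..\<pi> x - 1}"
      then have "v \<in> \<pi> ` {a..b}" using \<pi>x permutes_image[OF p] by auto
      then show "v \<in> \<pi> ` ?L" using v by force
    qed
  qed
  moreover have "card (\<pi> ` ?L) = card ?L"
    using permutes_inj[OF p] by (auto intro: card_image inj_on_subset)
  ultimately have "card ?L = nat (\<pi> x - a)" by simp
  moreover have "?L \<subseteq> {a..x - 1} \<union> smaller_right \<pi> {a..b} x"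
  proof
    fix r assume "r \<in> ?L"
    then show "r \<in> {a..x - 1} \<union> smaller_right \<pi> {a..b} x"
      by (cases r x rule: linorder_cases) (auto simp: smaller_right_def)
  qed
  then have "card ?L \<le> card ({a..x - 1} \<union> smaller_right \<pi> {a..b} x)"
    by (rule card_mono[rotated]) (simp add: smaller_right_def)
  then have "card ?L \<le> card {a..x - 1} + card (smaller_right \<pi> {a..b} x)"
    using card_Un_le order_trans by blast
  ultimately show ?thesis using x \<pi>x by auto
qed

lemma mallows_weight_displaced_up:
  assumes x: "x \<in> {a..b}" and q: "0 \<le> q" "q \<le> 1"
  shows "mallows_weight q {a..b} {\<pi>. \<pi> permutes {a..b} \<and> x + int m \<le> \<pi> x}
    \<le> q ^ m * mallows_weight q {a..b} {\<pi>. \<pi> permutes {a..b}}"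
proof -
  have "mallows_weight q {a..b} {\<pi>. \<pi> permutes {a..b} \<and> x + int m \<le> \<pi> x}
      \<le> mallows_weight q {a..b} {\<pi>. \<pi> permutes {a..b} \<and> m \<le> card (smaller_right \<pi> {a..b} x)}"
    using displacement_le_card_smaller_right[OF _ x] q
    by (intro mallows_weight_mono finite_subset[OF _ finite_permutations]) force+
  also have "\<dots> \<le> q ^ m * mallows_weight q {a..b} {\<pi>. \<pi> permutes {a..b}}"
    by (rule mallows_weight_smaller_right_ge[OF _ x q]) simp
  finally show ?thesis .
qed

definition reflect :: "(int \<Rightarrow> int) \<Rightarrow> int \<Rightarrow> int" where
  "reflect \<pi> = (\<lambda>r. - \<pi> (- r))"

lemma reflect_reflect [simp]: "reflect (reflect \<pi>) = \<pi>"
  by (simp add: reflect_def)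

lemma reflect_permutes:
  assumes "\<pi> permutes {a..b}"
  shows "reflect \<pi> permutes {-b..-a}"
proof (rule bij_imp_permutes)
  have "bij_betw uminus {-b..-a} {a..b}" "bij_betw uminus {a..b} {-b..-a}"
    by (auto intro!: bij_betwI[where g = uminus])
  then have "bij_betw (uminus \<circ> \<pi> \<circ> uminus) {-b..-a} {-b..-a}"
    by (metis bij_betw_trans permutes_imp_bij[OF assms])
  then show "bij_betw (reflect \<pi>) {-b..-a} {-b..-a}"
    by (simp add: reflect_def comp_def)
  show "\<And>x. x \<notin> {-b..-a} \<Longrightarrow> reflect \<pi> x = x"
    using permutes_not_in[OF assms] by (auto simp: reflect_def)
qed

lemma inversions_reflect: "inversions (reflect \<pi>) {-b..-a} = inversions \<pi> {a..b}"
proof -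
  let ?g = "\<lambda>(i::int, j::int). (- j, - i)"
  have "inversion_pairs (reflect \<pi>) {-b..-a} = ?g ` inversion_pairs \<pi> {a..b}"
  proof
    show "inversion_pairs (reflect \<pi>) {-b..-a} \<subseteq> ?g ` inversion_pairs \<pi> {a..b}"
    proof
      fix z assume "z \<in> inversion_pairs (reflect \<pi>) {-b..-a}"
      then obtain i j where z: "z = (i, j)" "(-j, -i) \<in> inversion_pairs \<pi> {a..b}"
        by (cases z) (auto simp: inversion_pairs_def reflect_def)
      then show "z \<in> ?g ` inversion_pairs \<pi> {a..b}" by force
    qed
  qed (auto simp: inversion_pairs_def reflect_def)
  moreover have "inj ?g" by (auto simp: inj_def)
  ultimately show ?thesis
    by (simp add: inversions_eq_card_inversion_pairs card_image inj_on_subset[of ?g UNIV])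
qed

lemma mallows_weight_reflect:
  "mallows_weight q {a..b} {\<pi>. \<pi> permutes {a..b} \<and> P \<pi>}
    = mallows_weight q {-b..-a} {\<sigma>. \<sigma> permutes {-b..-a} \<and> P (reflect \<sigma>)}"
  unfolding mallows_weight_def
proof (rule sum.reindex_bij_witness[where i = reflect and j = reflect])
  fix \<sigma> assume "\<sigma> \<in> {\<sigma>. \<sigma> permutes {-b..-a} \<and> P (reflect \<sigma>)}"
  then show "reflect \<sigma> \<in> {\<pi>. \<pi> permutes {a..b} \<and> P \<pi>}"
    using reflect_permutes[of \<sigma> "-b" "-a"] by simp
next
  fix \<pi> assume "\<pi> \<in> {\<pi>. \<pi> permutes {a..b} \<and> P \<pi>}"
  then show "reflect \<pi> \<in> {\<sigma>. \<sigma> permutes {-b..-a} \<and> P (reflect \<sigma>)}"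
    using reflect_permutes[of \<pi> a b] by simp
qed (auto simp: inversions_reflect)

lemma mallows_weight_displaced_down:
  assumes y: "y \<in> {a..b}" and q: "0 \<le> q" "q \<le> 1"
  shows "mallows_weight q {a..b} {\<pi>. \<pi> permutes {a..b} \<and> \<pi> y \<le> y - int m}
    \<le> q ^ m * mallows_weight q {a..b} {\<pi>. \<pi> permutes {a..b}}"
proof -
  have "mallows_weight q {a..b} {\<pi>. \<pi> permutes {a..b} \<and> \<pi> y \<le> y - int m}
      = mallows_weight q {-b..-a} {\<sigma>. \<sigma> permutes {-b..-a} \<and> reflect \<sigma> y \<le> y - int m}"
    by (rule mallows_weight_reflect)
  also have "\<dots> = mallows_weight q {-b..-a} {\<sigma>. \<sigma> permutes {-b..-a} \<and> - y + int m \<le> \<sigma> (- y)}"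
    by (rule arg_cong[where f = "mallows_weight q {-b..-a}"]) (auto simp: reflect_def)
  also have "\<dots> \<le> q ^ m * mallows_weight q {-b..-a} {\<sigma>. \<sigma> permutes {-b..-a}}"
    using y by (intro mallows_weight_displaced_up q) auto
  also have "mallows_weight q {-b..-a} {\<sigma>. \<sigma> permutes {-b..-a}}
      = mallows_weight q {a..b} {\<pi>. \<pi> permutes {a..b}}"
    using mallows_weight_reflect[of q a b "\<lambda>_. True"] by simp
  finally show ?thesis .
qed

lemma mallows_weight_inverted_pair:
  assumes x: "x \<in> {a..b}" and y: "y \<in> {a..b}" and xy: "x + 2 * int m \<le> y"
    and q: "0 \<le> q" "q \<le> 1"
  shows "mallows_weight q {a..b} {\<pi>. \<pi> permutes {a..b} \<and> \<pi> y < \<pi> x}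
    \<le> 2 * q ^ m * mallows_weight q {a..b} {\<pi>. \<pi> permutes {a..b}}"
proof -
  let ?W = "mallows_weight q {a..b}"
  let ?up = "{\<pi>. \<pi> permutes {a..b} \<and> x + int m \<le> \<pi> x}"
  let ?down = "{\<pi>. \<pi> permutes {a..b} \<and> \<pi> y \<le> y - int m}"
  have fin: "finite {\<pi>. \<pi> permutes {a..b}}" by (rule finite_permutations) simp
  have "?W {\<pi>. \<pi> permutes {a..b} \<and> \<pi> y < \<pi> x} \<le> ?W (?up \<union> ?down)"
    using xy q by (intro mallows_weight_mono) (auto intro: finite_subset[OF _ fin])
  also have "\<dots> \<le> ?W ?up + ?W ?down"
    unfolding mallows_weight_def using q
    by (subst sum_Un) (auto intro!: sum_nonneg intro: finite_subset[OF _ fin])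
  also have "\<dots> \<le> 2 * q ^ m * ?W {\<pi>. \<pi> permutes {a..b}}"
    using mallows_weight_displaced_up[OF x q, of m] mallows_weight_displaced_down[OF y q, of m]
    by simp
  finally show ?thesis .
qed

lemma pattern_interval:
  assumes "i \<in> {a..b}"
  shows "pattern \<sigma> {a..b} i = a + int (card {k \<in> {a..b}. \<sigma> k < \<sigma> i})"
proof -
  have "card {k \<in> {a..b}. \<sigma> k < \<sigma> i} \<le> card ({a..b} - {i})"
    by (rule card_mono) auto
  then have "a + int (card {k \<in> {a..b}. \<sigma> k < \<sigma> i}) \<le> b" using assms by auto
  then show ?thesis using assms by (simp add: pattern_def)
qed

lemma pattern_less_iff:
  assumes "x \<in> {a..b}" and "y \<in> {a..b}"
  shows "pattern \<sigma> {a..b} x < pattern \<sigma> {a..b} y \<longleftrightarrow> \<sigma> x < \<sigma> y"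
proof
  assume "\<sigma> x < \<sigma> y"
  then have "card {k \<in> {a..b}. \<sigma> k < \<sigma> x} < card {k \<in> {a..b}. \<sigma> k < \<sigma> y}"
    using assms by (intro psubset_card_mono) auto
  then show "pattern \<sigma> {a..b} x < pattern \<sigma> {a..b} y"
    using assms by (simp add: pattern_interval)
next
  assume less: "pattern \<sigma> {a..b} x < pattern \<sigma> {a..b} y"
  show "\<sigma> x < \<sigma> y"
  proof (rule ccontr)
    assume "\<not> \<sigma> x < \<sigma> y"
    then have "card {k \<in> {a..b}. \<sigma> k < \<sigma> y} \<le> card {k \<in> {a..b}. \<sigma> k < \<sigma> x}"
      by (intro card_mono) auto
    then show False using less assms by (simp add: pattern_interval)
  qed
qed

lemma pattern_permutes:
  assumes inj: "inj \<sigma>"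
  shows "pattern \<sigma> {a..b} permutes {a..b}"
proof (rule bij_imp_permutes)
  have "inj_on (pattern \<sigma> {a..b}) {a..b}"
  proof (rule inj_onI)
    fix x y assume "x \<in> {a..b}" "y \<in> {a..b}" "pattern \<sigma> {a..b} x = pattern \<sigma> {a..b} y"
    then have "\<not> \<sigma> x < \<sigma> y" "\<not> \<sigma> y < \<sigma> x" using pattern_less_iff by (metis less_irrefl)+
    then show "x = y" using inj by (metis injD not_less_iff_gr_or_eq)
  qed
  moreover have "pattern \<sigma> {a..b} ` {a..b} \<subseteq> {a..b}"
  proof
    fix z assume "z \<in> pattern \<sigma> {a..b} ` {a..b}"
    then obtain i where i: "i \<in> {a..b}" "z = pattern \<sigma> {a..b} i" by auto
    have "card {k \<in> {a..b}. \<sigma> k < \<sigma> i} \<le> card ({a..b} - {i})" by (rule card_mono) auto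
    then show "z \<in> {a..b}" using i pattern_interval[OF i(1)] by auto
  qed
  ultimately show "bij_betw (pattern \<sigma> {a..b}) {a..b} {a..b}"
    by (simp add: bij_betw_def endo_inj_surj)
  show "\<And>x. x \<notin> {a..b} \<Longrightarrow> pattern \<sigma> {a..b} x = x" unfolding pattern_def by auto
qed

lemma pattern_extend:
  assumes i: "i \<in> {a..b}" and "\<sigma> (a - 1) < \<sigma> i" and "\<sigma> i < \<sigma> (b + 1)"
  shows "pattern \<sigma> {a - 1..b + 1} i = pattern \<sigma> {a..b} i"
proof -
  have "{k \<in> {a - 1..b + 1}. \<sigma> k < \<sigma> i} = insert (a - 1) {k \<in> {a..b}. \<sigma> k < \<sigma> i}"
    using assms by (auto; smt (verit))
  then have "card {k \<in> {a - 1..b + 1}. \<sigma> k < \<sigma> i} = Suc (card {k \<in> {a..b}. \<sigma> k < \<sigma> i})"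
    by simp
  then show ?thesis using pattern_interval[of i "a - 1" "b + 1"] pattern_interval[OF i] i by simp
qed

lemma pattern_shrink_left:
  assumes i: "i \<in> {a + 1..b}" and "\<sigma> a < \<sigma> i"
  shows "pattern \<sigma> {a + 1..b} i = pattern \<sigma> {a..b} i"
proof -
  have "{k \<in> {a..b}. \<sigma> k < \<sigma> i} = insert a {k \<in> {a + 1..b}. \<sigma> k < \<sigma> i}"
    using assms by (auto; smt (verit))
  then have "card {k \<in> {a..b}. \<sigma> k < \<sigma> i} = Suc (card {k \<in> {a + 1..b}. \<sigma> k < \<sigma> i})"
    by simp
  then show ?thesis using pattern_interval[OF i] pattern_interval[of i a b] i by simp
qed

text \<open>Only the events fixing the whole pattern are known to be measurable, hence the union over
  patterns instead of the set where \<Sigma> y < \<Sigma> x.\<close>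
definition pattern_inversion_event ::
    "'w measure \<Rightarrow> ('w \<Rightarrow> int \<Rightarrow> int) \<Rightarrow> int set \<Rightarrow> int \<Rightarrow> int \<Rightarrow> 'w set" where
  "pattern_inversion_event M \<Sigma> A x y =
     (\<Union>\<pi>\<in>{\<pi>. \<pi> permutes A \<and> \<pi> y < \<pi> x}. {\<omega> \<in> space M. pattern (\<Sigma> \<omega>) A = \<pi>})"

lemma less_if_not_in_pattern_inversion_event:
  assumes inj: "inj (\<Sigma> \<omega>)" and \<omega>: "\<omega> \<in> space M - pattern_inversion_event M \<Sigma> {a..b} x y"
    and "x \<in> {a..b}" and "y \<in> {a..b}" and "x \<noteq> y"
  shows "\<Sigma> \<omega> x < \<Sigma> \<omega> y"
proof -
  have "\<not> \<Sigma> \<omega> y < \<Sigma> \<omega> x"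
    using assms pattern_permutes[OF inj, of a b] pattern_less_iff[of y a b x "\<Sigma> \<omega>"]
    by (auto simp: pattern_inversion_event_def)
  moreover have "\<Sigma> \<omega> x \<noteq> \<Sigma> \<omega> y" using inj \<open>x \<noteq> y\<close> by (auto dest: injD)
  ultimately show ?thesis by simp
qed

lemma sets_pattern_inversion_event:
  assumes "mallows_Z M q \<Sigma>"
  shows "pattern_inversion_event M \<Sigma> {a..b} x y \<in> sets M"
  using assms unfolding pattern_inversion_event_def mallows_Z_def
  by (intro sets.finite_UN) (auto intro: finite_subset[OF _ finite_permutations[of "{a..b}"]])

lemma measure_pattern_inversion_event_le:
  assumes m: "mallows_Z M q \<Sigma>" and q: "0 < q" "q \<le> 1"
    and x: "x \<in> {a..b}" and y: "y \<in> {a..b}" and xy: "x + 2 * int k \<le> y"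
  shows "measure M (pattern_inversion_event M \<Sigma> {a..b} x y) \<le> 2 * q ^ k"
proof -
  let ?S = "{\<pi>. \<pi> permutes {a..b} \<and> \<pi> y < \<pi> x}"
  let ?E = "\<lambda>\<pi>. {\<omega> \<in> space M. pattern (\<Sigma> \<omega>) {a..b} = \<pi>}"
  let ?Z = "mallows_weight q {a..b} {\<pi>. \<pi> permutes {a..b}}"
  have E: "?E \<pi> \<in> sets M" "measure M (?E \<pi>) = q ^ inversions \<pi> {a..b} / ?Z" if "\<pi> \<in> ?S" for \<pi>
    using m that unfolding mallows_Z_def mallows_weight_def by auto
  have Z: "1 \<le> ?Z" using q by (intro mallows_weight_permutes_ge_one) auto
  have "measure M (pattern_inversion_event M \<Sigma> {a..b} x y) \<le> (\<Sum>\<pi>\<in>?S. measure M (?E \<pi>))"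
    unfolding pattern_inversion_event_def using E
    by (intro measure_UNION_le finite_subset[OF _ finite_permutations[of "{a..b}"]]) auto
  also have "\<dots> = mallows_weight q {a..b} ?S / ?Z"
    using E by (simp add: mallows_weight_def sum_divide_distrib)
  also have "\<dots> \<le> 2 * q ^ k"
    using mallows_weight_inverted_pair[OF x y xy, of q] q Z by (simp add: divide_le_eq)
  finally show ?thesis .
qed

definition central_window :: "real \<Rightarrow> nat \<Rightarrow> int set" where
  "central_window K n = {i. \<bar>i\<bar> < int n \<and> real_of_int \<bar>i\<bar> \<le> real n - K * ln (real n)}"

lemma finite_central_window: "finite (central_window K n)"
  by (rule finite_subset[of _ "{- int n..int n}"]) (auto simp: central_window_def)

lemma card_central_window: "card (central_window K n) \<le> 2 * n + 1"
proof -
  have "card (central_window K n) \<le> card {- int n..int n}"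
    by (rule card_mono) (auto simp: central_window_def)
  then show ?thesis by simp
qed

lemma eventually_central_window:
  assumes K: "0 < K"
  shows "\<forall>\<^sub>F n in sequentially. \<forall>m\<ge>n. \<forall>i.
           real_of_int \<bar>i\<bar> \<le> real n - (ln (real n))\<^sup>2 \<longrightarrow> i \<in> central_window K m"
proof -
  have "\<forall>\<^sub>F n in sequentially. K * ln (real n) \<le> (ln (real n))\<^sup>2"
    using K by real_asymp
  moreover have "\<forall>\<^sub>F n in sequentially. K \<le> real n" by real_asymp
  moreover have "\<forall>\<^sub>F n in sequentially. 2 \<le> real n" by real_asymp
  ultimately show ?thesis
  proof eventually_elim
    case (elim n)
    show ?case
    proof (intro allI impI)
      fix m i assume m: "n \<le> m" and i: "real_of_int \<bar>i\<bar> \<le> real n - (ln (real n))\<^sup>2"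
      have n0: "0 < real n" using elim by simp
      have "0 < ln (real n)" using elim by simp
      then have "\<bar>i\<bar> < int m"
        using i m by (smt (verit) of_int_less_iff of_nat_le_iff of_int_of_nat_eq zero_less_power)
      have "ln (real m) - ln (real n) = ln (real m / real n)" using n0 m by (simp add: ln_div)
      also have "\<dots> \<le> real m / real n - 1" using n0 m by (intro ln_le_minus_one) simp
      finally have "K * (ln (real m) - ln (real n)) \<le> K * (real m / real n - 1)"
        using K by (intro mult_left_mono) auto
      also have "\<dots> \<le> real n * (real m / real n - 1)"
        using elim m n0 by (intro mult_right_mono) (auto simp: field_simps)
      also have "\<dots> = real m - real n" using n0 by (simp add: field_simps)
      finally show "i \<in> central_window K m"
        using \<open>\<bar>i\<bar> < int m\<close> i elim by (simp add: central_window_def algebra_simps)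
    qed
  qed
qed

definition boundary_crossing_event :: "'w measure \<Rightarrow> ('w \<Rightarrow> int \<Rightarrow> int) \<Rightarrow> real \<Rightarrow> nat \<Rightarrow> 'w set" where
  "boundary_crossing_event M \<Sigma> K n = (\<Union>i\<in>central_window K n.
     pattern_inversion_event M \<Sigma> {- int n - 1..int n + 1} (- int n - 1) i \<union>
     pattern_inversion_event M \<Sigma> {- int n - 1..int n + 1} i (int n + 1) \<union>
     pattern_inversion_event M \<Sigma> {- int n..int n} (- int n) i)"

lemma sets_boundary_crossing_event:
  "mallows_Z M q \<Sigma> \<Longrightarrow> boundary_crossing_event M \<Sigma> K n \<in> sets M"
  unfolding boundary_crossing_event_def using finite_central_window
  by (intro sets.finite_UN sets.Un sets_pattern_inversion_event) auto

lemma measure_boundary_crossing_event_le: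
  assumes m: "mallows_Z M q \<Sigma>" and q: "0 < q" "q \<le> 1"
  shows "measure M (boundary_crossing_event M \<Sigma> K n)
    \<le> 6 * (2 * real n + 1) * q ^ nat \<lfloor>K * ln (real n) / 2\<rfloor>"
proof -
  define k where "k = nat \<lfloor>K * ln (real n) / 2\<rfloor>"
  let ?E = "\<lambda>A x y. pattern_inversion_event M \<Sigma> A x y"
  have sets: "?E {a..b} x y \<in> sets M" for a b x y
    using sets_pattern_inversion_event[OF m] .
  have each: "measure M (?E {- int n - 1..int n + 1} (- int n - 1) i \<union>
      ?E {- int n - 1..int n + 1} i (int n + 1) \<union> ?E {- int n..int n} (- int n) i) \<le> 6 * q ^ k"
    if i: "i \<in> central_window K n" for i
  proof -
    have dk: "2 * int k \<le> d" if "K * ln (real n) \<le> real_of_int d" "0 \<le> d" for d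
      using that unfolding k_def by linarith
    have "real_of_int \<bar>i\<bar> \<le> real n - K * ln (real n)" "\<bar>i\<bar> < int n"
      using i by (auto simp: central_window_def)
    then have "2 * int k \<le> i + int n" "2 * int k \<le> int n - i"
      by (auto intro!: dk)
    then have gaps: "- int n - 1 + 2 * int k \<le> i" "i + 2 * int k \<le> int n + 1" "- int n + 2 * int k \<le> i"
      by linarith+
    let ?A = "?E {- int n - 1..int n + 1} (- int n - 1) i"
    let ?B = "?E {- int n - 1..int n + 1} i (int n + 1)"
    let ?C = "?E {- int n..int n} (- int n) i"
    have "measure M ?A \<le> 2 * q ^ k" "measure M ?B \<le> 2 * q ^ k" "measure M ?C \<le> 2 * q ^ k"
      using i gaps by (auto simp: central_window_def intro!: measure_pattern_inversion_event_le[OF m q])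
    moreover have "measure M (?A \<union> ?B \<union> ?C) \<le> measure M (?A \<union> ?B) + measure M ?C"
      by (intro measure_Un_le sets.Un sets)
    moreover have "measure M (?A \<union> ?B) \<le> measure M ?A + measure M ?B"
      by (intro measure_Un_le sets)
    ultimately show ?thesis by linarith
  qed
  have "measure M (boundary_crossing_event M \<Sigma> K n)
      \<le> (\<Sum>i\<in>central_window K n. 6 * q ^ k)"
    unfolding boundary_crossing_event_def using finite_central_window sets each
    by (intro order_trans[OF measure_UNION_le sum_mono]) auto
  also have "\<dots> \<le> (2 * real n + 1) * (6 * q ^ k)"
    using card_central_window[of K n] q by (simp add: mult_right_mono)
  finally show ?thesis by (simp add: k_def algebra_simps)
qed

lemma power_nat_floor_half_le:
  fixes q t :: real
  assumes "0 < q" and "q \<le> 1"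
  shows "q ^ nat \<lfloor>t / 2\<rfloor> \<le> q powr (t / 2 - 1)"
proof -
  have "t / 2 - 1 \<le> real (nat \<lfloor>t / 2\<rfloor>)" by linarith
  then have "q powr real (nat \<lfloor>t / 2\<rfloor>) \<le> q powr (t / 2 - 1)"
    using assms by (intro powr_mono') auto
  then show ?thesis using assms by (simp add: powr_realpow)
qed

text \<open>With K = 8 / log (1/q) the window margin K log n makes each crossing probability of
  order n^-4, which beats the 2n + 1 positions in the window.\<close>
lemma summable_measure_boundary_crossing_event:
  assumes m: "mallows_Z M q \<Sigma>" and q: "0 < q" "q < 1"
  shows "summable (\<lambda>n. measure M (boundary_crossing_event M \<Sigma> (- 8 / ln q) n))"
proof (rule summable_comparison_test_ev)
  let ?K = "- 8 / ln q"
  have "ln q < 0" using q by simp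
  show "\<forall>\<^sub>F n in sequentially. norm (measure M (boundary_crossing_event M \<Sigma> ?K n))
      \<le> 6 / q * ((2 * real n + 1) * real n powr - 4)"
    unfolding eventually_sequentially
  proof (intro exI allI impI)
    fix n :: nat assume "1 \<le> n"
    have "(?K * ln (real n) / 2 - 1) * ln q = - 4 * ln (real n) - ln q"
      using \<open>ln q < 0\<close> by (simp add: field_simps)
    then have "q powr (?K * ln (real n) / 2 - 1) = real n powr - 4 / q"
      using q \<open>1 \<le> n\<close> by (simp add: powr_def exp_diff)
    then have "q ^ nat \<lfloor>?K * ln (real n) / 2\<rfloor> \<le> real n powr - 4 / q"
      using power_nat_floor_half_le[of q] q by (metis less_imp_le)
    then have "6 * (2 * real n + 1) * q ^ nat \<lfloor>?K * ln (real n) / 2\<rfloor>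
        \<le> 6 * (2 * real n + 1) * (real n powr - 4 / q)"
      by (intro mult_left_mono) auto
    then show "norm (measure M (boundary_crossing_event M \<Sigma> ?K n))
        \<le> 6 / q * ((2 * real n + 1) * real n powr - 4)"
      using measure_boundary_crossing_event_le[OF m q(1) less_imp_le[OF q(2)], of ?K n]
      by (simp add: field_simps)
  qed
  have "summable (\<lambda>n. (2 * real n + 1) * real n powr - 4)"
  proof (rule summable_comparison_test_bigo)
    show "summable (\<lambda>n. norm (real n powr - 2))"
      by (simp add: summable_real_powr_iff)
    show "(\<lambda>n. (2 * real n + 1) * real n powr - 4) \<in> O(\<lambda>n. real n powr - 2)"
      by real_asymp
  qed
  then show "summable (\<lambda>n. 6 / q * ((2 * real n + 1) * real n powr - 4))"
    by (rule summable_mult)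
qed

lemma pattern_eq_if_boundaries_separated:
  assumes lim: "\<forall>\<^sub>F m in sequentially. pattern \<sigma> {- int m..int m} i = \<sigma> i"
    and i: "\<bar>i\<bar> \<le> int n"
    and sep: "\<And>m. n \<le> m \<Longrightarrow> \<sigma> (- int m - 1) < \<sigma> i \<and> \<sigma> i < \<sigma> (int m + 1)"
  shows "pattern \<sigma> {- int n..int n} i = \<sigma> i"
proof -
  have stable: "pattern \<sigma> {- int (n + k)..int (n + k)} i = pattern \<sigma> {- int n..int n} i" for k
  proof (induction k)
    case (Suc k)
    have "{- int (n + Suc k)..int (n + Suc k)} = {- int (n + k) - 1..int (n + k) + 1}"
      by auto
    then show ?case
      by (simp only:) (rule trans[OF pattern_extend Suc.IH], use i sep[of "n + k"] in auto)
  qed simp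
  obtain m0 where m0: "\<And>m. m0 \<le> m \<Longrightarrow> pattern \<sigma> {- int m..int m} i = \<sigma> i"
    using lim by (auto simp: eventually_sequentially)
  show ?thesis using trans[OF stable[of m0, symmetric] m0[of "n + m0"]] by simp
qed

lemma pattern_eq_on_shrunken_intervals:
  assumes K: "0 < K"
    and lim: "\<forall>i. \<forall>\<^sub>F m in sequentially. pattern \<sigma> {- int m..int m} i = \<sigma> i"
    and sep: "\<And>n i. N0 \<le> n \<Longrightarrow> i \<in> central_window K n \<Longrightarrow>
      \<sigma> (- int n - 1) < \<sigma> i \<and> \<sigma> i < \<sigma> (int n + 1) \<and> \<sigma> (- int n) < \<sigma> i"
  shows "\<exists>N::nat. \<forall>n\<ge>N. \<forall>i::int. real_of_int \<bar>i\<bar> \<le> real n - (ln (real n))\<^sup>2 \<longrightarrow>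
           pattern \<sigma> {- int n..int n} i = \<sigma> i \<and> pattern \<sigma> {- int n + 1..int n} i = \<sigma> i"
proof -
  obtain N1 where N1: "\<And>n m i. N1 \<le> n \<Longrightarrow> n \<le> m \<Longrightarrow>
      real_of_int \<bar>i\<bar> \<le> real n - (ln (real n))\<^sup>2 \<Longrightarrow> i \<in> central_window K m"
    using eventually_central_window[OF K] unfolding eventually_sequentially by blast
  have "pattern \<sigma> {- int n..int n} i = \<sigma> i \<and> pattern \<sigma> {- int n + 1..int n} i = \<sigma> i"
    if n: "max N0 N1 \<le> n" and i: "real_of_int \<bar>i\<bar> \<le> real n - (ln (real n))\<^sup>2" for n i
  proof -
    have win: "i \<in> central_window K m" if "n \<le> m" for m
      using N1 n i that by auto
    then have "\<bar>i\<bar> < int n" by (simp add: central_window_def)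
    have "pattern \<sigma> {- int n..int n} i = \<sigma> i"
      using lim \<open>\<bar>i\<bar> < int n\<close> sep win n
      by (intro pattern_eq_if_boundaries_separated) auto
    moreover have "pattern \<sigma> {- int n + 1..int n} i = pattern \<sigma> {- int n..int n} i"
      using \<open>\<bar>i\<bar> < int n\<close> sep[OF _ win] n by (intro pattern_shrink_left) auto
    ultimately show ?thesis by simp
  qed
  then show ?thesis by blast
qed

theorem lemma5p1:
  fixes M :: "'w measure" and q :: real and \<Sigma> :: "'w \<Rightarrow> int \<Rightarrow> int"
  assumes "0 < q" and "q < 1"
    and "mallows_Z M q \<Sigma>"
  shows "AE \<omega> in M. \<exists>N::nat. \<forall>n\<ge>N. \<forall>i::int.
           real_of_int \<bar>i\<bar> \<le> real n - (ln (real n))\<^sup>2 \<longrightarrow>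
             pattern (\<Sigma> \<omega>) {- int n..int n} i = \<Sigma> \<omega> i \<and>
             pattern (\<Sigma> \<omega>) {- int n + 1..int n} i = \<Sigma> \<omega> i"
proof -
  note m = assms(3)
  interpret prob_space M using m by (simp add: mallows_Z_def)
  define K where "K = - 8 / ln q"
  have K: "0 < K" using assms by (simp add: K_def divide_neg_neg)
  have "AE \<omega> in M. \<forall>\<^sub>F n in sequentially. \<omega> \<in> space M - boundary_crossing_event M \<Sigma> K n"
    using summable_measure_boundary_crossing_event[OF m assms(1,2)]
    by (intro borel_cantelli_AE1 sets_boundary_crossing_event[OF m]) (auto simp: K_def less_top[symmetric])
  moreover have "AE \<omega> in M. bij (\<Sigma> \<omega>)"
    and "AE \<omega> in M. \<forall>i. \<forall>\<^sub>F n in sequentially. pattern (\<Sigma> \<omega>) {- int n..int n} i = \<Sigma> \<omega> i"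
    using m by (auto simp: mallows_Z_def)
  ultimately show ?thesis
  proof eventually_elim
    case (elim \<omega>)
    have inj: "inj (\<Sigma> \<omega>)" using elim(2) bij_is_inj by blast
    obtain N0 where N0: "\<And>n. N0 \<le> n \<Longrightarrow> \<omega> \<in> space M - boundary_crossing_event M \<Sigma> K n"
      using elim(1) unfolding eventually_sequentially by blast
    show ?case
    proof (rule pattern_eq_on_shrunken_intervals[OF K elim(3)])
      fix n i assume "N0 \<le> n" and i: "i \<in> central_window K n"
      then have "\<omega> \<in> space M - pattern_inversion_event M \<Sigma> {- int n - 1..int n + 1} (- int n - 1) i"
          "\<omega> \<in> space M - pattern_inversion_event M \<Sigma> {- int n - 1..int n + 1} i (int n + 1)"
          "\<omega> \<in> space M - pattern_inversion_event M \<Sigma> {- int n..int n} (- int n) i"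
        using N0 unfolding boundary_crossing_event_def by auto
      moreover have "\<bar>i\<bar> < int n" using i by (simp add: central_window_def)
      ultimately show "\<Sigma> \<omega> (- int n - 1) < \<Sigma> \<omega> i \<and> \<Sigma> \<omega> i < \<Sigma> \<omega> (int n + 1) \<and> \<Sigma> \<omega> (- int n) < \<Sigma> \<omega> i"
        by (auto intro!: less_if_not_in_pattern_inversion_event[of \<Sigma> \<omega>, OF inj])
    qed
  qed
qed

end
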